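(* Let $f(x,y)=\dfrac{(x+1)(y+1)}{x+y+1}$. The multiplicative subgroup of $\mathbb{Q}^{+}$ generated by the set $\{f(x,y) : x,y \text{ positive integers}\}$ is all of $\mathbb{Q}^{+}$.
   Context: $\mathbb{Q}^+$ denotes the multiplicative group of positive rational numbers. *)

theory Defs
  imports Complex_Main
begin

definition f :: "nat \<Rightarrow> nat \<Rightarrow> rat" where
  "f x y = (of_nat (x + 1) * of_nat (y + 1)) / of_nat (x + y + 1)"

text \<open>The subgroup of the multiplicative group of nonzero rationals generated by S
  (for S a set of positive rationals this is the subgroup of Q+ generated by S):
  the smallest set containing 1 and S, closed under products and inverses.\<close>
inductive_set mult_subgroup_gen :: "rat set \<Rightarrow> rat set" for S :: "rat set" where
  one: "1 \<in> mult_subgroup_gen S"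
| gen: "s \<in> S \<Longrightarrow> s \<in> mult_subgroup_gen S"
| mult: "a \<in> mult_subgroup_gen S \<Longrightarrow> b \<in> mult_subgroup_gen S \<Longrightarrow> a * b \<in> mult_subgroup_gen S"
| inv: "a \<in> mult_subgroup_gen S \<Longrightarrow> inverse a \<in> mult_subgroup_gen S"

end

theory Submission
  imports Defs
begin

text \<open>Since f 1 m = 2(m+1)/(m+2), the group contains f 1 1 * f 1 2 = 2 and, inductively,
  every integer m + 2 = 2(m+1) / f 1 m with m \<ge> 1; quotients of positive integers give
  all of Q+. Conversely every generator is positive.\<close>

lemma mult_subgroup_gen_divide:
  assumes "a \<in> mult_subgroup_gen S" and "b \<in> mult_subgroup_gen S"
  shows "a / b \<in> mult_subgroup_gen S"
  using assms by (simp add: divide_inverse mult_subgroup_gen.mult mult_subgroup_gen.inv)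

lemma mult_subgroup_gen_subset_pos:
  assumes "\<And>s. s \<in> S \<Longrightarrow> s > 0"
  shows "mult_subgroup_gen S \<subseteq> {q. q > 0}"
proof
  fix q assume "q \<in> mult_subgroup_gen S"
  then show "q \<in> {q. q > 0}"
    by induction (auto simp: assms)
qed

lemma pos_subset_mult_subgroup_gen:
  assumes nat: "\<And>n. n > 0 \<Longrightarrow> of_nat n \<in> mult_subgroup_gen S"
  shows "{q. q > 0} \<subseteq> mult_subgroup_gen S"
proof
  fix q :: rat assume "q \<in> {q. q > 0}"
  obtain a b where ab: "quotient_of q = (a, b)" by (cases "quotient_of q")
  have q: "q = of_int a / of_int b" using quotient_of_div[OF ab] .
  have b: "b > 0" using quotient_of_denom_pos[OF ab] .
  with \<open>q \<in> {q. q > 0}\<close> q have a: "a > 0" by (auto simp: zero_less_divide_iff)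
  have "of_nat (nat a) / of_nat (nat b) \<in> mult_subgroup_gen S"
    using a b by (intro mult_subgroup_gen_divide nat) auto
  with a b q show "q \<in> mult_subgroup_gen S" by simp
qed

lemma f_pos: "x > 0 \<Longrightarrow> y > 0 \<Longrightarrow> f x y > 0"
  unfolding f_def by (simp add: divide_pos_pos)

lemma f_1_1_mult_f_1_2: "f 1 1 * f 1 2 = 2"
  by (simp add: f_def)

lemma of_nat_Suc_Suc_eq_f_1: "of_nat (m + 2) = 2 * of_nat (m + 1) / f 1 m"
  by (simp add: f_def field_simps)

lemma of_nat_in_mult_subgroup_gen_f:
  assumes "n > 0"
  shows "of_nat n \<in> mult_subgroup_gen {f x y | x y. x > 0 \<and> y > 0}"
proof -
  let ?G = "mult_subgroup_gen {f x y | x y. x > 0 \<and> y > 0}"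
  have f: "f x y \<in> ?G" if "x > 0" "y > 0" for x y
    using that by (intro mult_subgroup_gen.gen) blast
  have two: "2 \<in> ?G"
    using mult_subgroup_gen.mult[OF f f] by (simp flip: f_1_1_mult_f_1_2)
  have "of_nat n \<in> ?G" if "n \<ge> 2" for n
    using that
  proof (induction n rule: nat_induct_at_least)
    case base
    then show ?case using two by simp
  next
    case (Suc n)
    have "2 * of_nat (n - 1 + 1) / f 1 (n - 1) \<in> ?G"
      using Suc two f[of 1 "n - 1"]
      by (intro mult_subgroup_gen_divide mult_subgroup_gen.mult) auto
    then show ?case
      using Suc.hyps of_nat_Suc_Suc_eq_f_1[of "n - 1"] by (simp add: Suc_diff_le)
  qed
  with assms show ?thesis
    by (cases "n = 1") (auto intro: mult_subgroup_gen.one)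
qed

theorem mainTheorem5:
  shows "mult_subgroup_gen {f x y | x y. x > 0 \<and> y > 0} = {q :: rat. q > 0}"
proof
  show "mult_subgroup_gen {f x y | x y. x > 0 \<and> y > 0} \<subseteq> {q. q > 0}"
    by (rule mult_subgroup_gen_subset_pos) (auto simp: f_pos)
  show "{q. q > 0} \<subseteq> mult_subgroup_gen {f x y | x y. x > 0 \<and> y > 0}"
    by (rule pos_subset_mult_subgroup_gen) (rule of_nat_in_mult_subgroup_gen_f)
qed

end
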